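(* Let $K_1,K_2$ be nonempty finite simplicial complexes (each having at least one vertex) on disjoint vertex sets, let $i\ge 0$, and let $K=K_1*K_2$ be their join. If $\dim K_1+\dim K_2\ge i+1$, then $B_i(K)$ is unbalanced.
   Context: The join $K_1*K_2$ is the complex on $V(K_1)\cup V(K_2)$ whose faces are $F_1\cup F_2$ with $F_1\in K_1$, $F_2\in K_2$. The dimension of a complex is the maximum of $|F|-1$ over its faces. $S_j(K)$ is the set of faces of cardinality $j+1$. For an oriented complex $K$ (orientation: ordering of each face up to even permutations), $B_i(K)$ is the signed bipartite graph on $S_i(K)\cup S_{i+1}(K)$ with edges $\{G,\bar G\}$ for $G\subset\bar G$, signed by the boundary incidence sign $\mathrm{sgn}([G],\partial[\bar G])\in\{\pm1\}$ ($(-1)^j$ if $G$ is $\bar G$ minus its $j$-th vertex with agreeing orientation, negated otherwise). A signed graph is balanced if every cycle has positive sign product; this property of $B_i(K)$ is independent of the orientation. *)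

theory Defs
  imports "HOL-Combinatorics.Permutations"
begin

text \<open>Finite abstract simplicial complexes: finite families of finite sets closed under subsets
  (so every nonempty complex contains the empty face).\<close>
definition simplicial_complex :: "'a set set \<Rightarrow> bool" where
  "simplicial_complex K \<longleftrightarrow> finite K \<and> (\<forall>F\<in>K. finite F) \<and> (\<forall>F\<in>K. \<forall>G. G \<subseteq> F \<longrightarrow> G \<in> K)"

definition vertices :: "'a set set \<Rightarrow> 'a set" where
  "vertices K = \<Union>K"

definition join :: "'a set set \<Rightarrow> 'a set set \<Rightarrow> 'a set set" where
  "join K1 K2 = {F1 \<union> F2 | F1 F2. F1 \<in> K1 \<and> F2 \<in> K2}"

definition cdim :: "'a set set \<Rightarrow> int" where
  "cdim K = Max ((\<lambda>F. int (card F) - 1) ` K)"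

definition faces_of :: "nat \<Rightarrow> 'a set set \<Rightarrow> 'a set set" where
  "faces_of j K = {F \<in> K. card F = j + 1}"

text \<open>An orientation: an ordering of each face (orderings are understood up to even permutations;
  all notions below only depend on that class).\<close>
definition orientation :: "'a set set \<Rightarrow> ('a set \<Rightarrow> 'a list) \<Rightarrow> bool" where
  "orientation K ord \<longleftrightarrow> (\<forall>F\<in>K. distinct (ord F) \<and> set (ord F) = F)"

fun pos_in :: "'a \<Rightarrow> 'a list \<Rightarrow> nat" where
  "pos_in x [] = 0"
| "pos_in x (y # ys) = (if x = y then 0 else Suc (pos_in x ys))"

definition list_perm :: "'a list \<Rightarrow> 'a list \<Rightarrow> nat \<Rightarrow> nat" where
  "list_perm xs ys = (\<lambda>k. if k < length xs then pos_in (xs ! k) ys else k)"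

definition rel_sign :: "'a list \<Rightarrow> 'a list \<Rightarrow> int" where
  "rel_sign xs ys = sign (list_perm xs ys)"

text \<open>Boundary incidence sign sgn([G], \<partial>[Gb]) for G = Gb minus one vertex:
  (-1)^j if G is Gb minus its j-th vertex (0-based) with agreeing orientation, negated otherwise.\<close>
definition inc_sign :: "('a set \<Rightarrow> 'a list) \<Rightarrow> 'a set \<Rightarrow> 'a set \<Rightarrow> int" where
  "inc_sign ord G Gb =
     (let L = ord Gb; v = the_elem (Gb - G)
      in (-1) ^ pos_in v L * rel_sign (remove1 v L) (ord G))"

definition B_vertices :: "nat \<Rightarrow> 'a set set \<Rightarrow> 'a set set" where
  "B_vertices i K = faces_of i K \<union> faces_of (i + 1) K"

definition B_adj :: "nat \<Rightarrow> 'a set set \<Rightarrow> 'a set \<Rightarrow> 'a set \<Rightarrow> bool" where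
  "B_adj i K x y \<longleftrightarrow>
     (x \<in> faces_of i K \<and> y \<in> faces_of (i + 1) K \<and> x \<subset> y) \<or>
     (y \<in> faces_of i K \<and> x \<in> faces_of (i + 1) K \<and> y \<subset> x)"

definition B_sign :: "('a set \<Rightarrow> 'a list) \<Rightarrow> 'a set \<Rightarrow> 'a set \<Rightarrow> int" where
  "B_sign ord x y = (if card x < card y then inc_sign ord x y else inc_sign ord y x)"

definition B_cycle :: "nat \<Rightarrow> 'a set set \<Rightarrow> 'a set list \<Rightarrow> bool" where
  "B_cycle i K c \<longleftrightarrow> length c \<ge> 3 \<and> distinct c \<and> set c \<subseteq> B_vertices i K \<and>
     (\<forall>j < length c. B_adj i K (c ! j) (c ! ((j + 1) mod length c)))"

definition cycle_sign :: "('a set \<Rightarrow> 'a list) \<Rightarrow> 'a set list \<Rightarrow> int" where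
  "cycle_sign ord c = (\<Prod>j < length c. B_sign ord (c ! j) (c ! ((j + 1) mod length c)))"

definition B_balanced :: "nat \<Rightarrow> 'a set set \<Rightarrow> ('a set \<Rightarrow> 'a list) \<Rightarrow> bool" where
  "B_balanced i K ord \<longleftrightarrow> (\<forall>c. B_cycle i K c \<longrightarrow> cycle_sign ord c > 0)"

end

theory Submission
  imports Defs
begin

text \<open>Take a face V of K with i + 3 vertices and three of its vertices x, y, z. The six faces
  V - {x}, V - {x,y}, V - {y}, V - {y,z}, V - {z}, V - {z,x} form a cycle of B_i(K). For every
  pair a, b the relation \<partial>\<partial>[V] = 0, read off at the coefficient of [V - {a,b}], says that the
  square V, V - {a}, V - {a,b}, V - {b} has negative sign product. The cycle sign is the product
  of the three squares for {x,y}, {y,z}, {z,x}, since the incidences with V occur twice each;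
  hence it is -1. A join of nonempty complexes with dim K1 + dim K2 \<ge> i + 1 contains such a V,
  inside the join of a maximal face of K1 and one of K2.\<close>

subsection \<open>Signs of reorderings of a list\<close>

lemma pos_in_less: "x \<in> set ys \<Longrightarrow> pos_in x ys < length ys"
  by (induction ys) auto

lemma nth_pos_in: "x \<in> set ys \<Longrightarrow> ys ! pos_in x ys = x"
  by (induction ys) auto

lemma pos_in_nth: "distinct ys \<Longrightarrow> k < length ys \<Longrightarrow> pos_in (ys ! k) ys = k"
proof (induction ys arbitrary: k)
  case (Cons a ys) then show ?case by (cases k) auto
qed simp

lemma pos_in_append_in: "x \<in> set ys \<Longrightarrow> pos_in x (ys @ zs) = pos_in x ys"
  by (induction ys) auto

lemma pos_in_append_notin: "x \<notin> set ys \<Longrightarrow> pos_in x (ys @ zs) = length ys + pos_in x zs"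
  by (induction ys) auto

lemma pos_in_remove1_sum:
  "distinct W \<Longrightarrow> x \<in> set W \<Longrightarrow> y \<in> set W \<Longrightarrow> x \<noteq> y \<Longrightarrow>
   pos_in y (remove1 x W) + pos_in x (remove1 y W) + 1 = pos_in x W + pos_in y W"
  by (induction W) auto

lemma list_perm_eqI:
  assumes "distinct ys" "length xs = length ys"
    and "\<And>k. k \<ge> length xs \<Longrightarrow> f k = k"
    and "\<And>k. k < length xs \<Longrightarrow> f k < length xs \<and> xs ! k = ys ! f k"
  shows "list_perm xs ys = f"
proof
  fix k show "list_perm xs ys k = f k"
    using assms pos_in_nth[OF assms(1), of "f k"]
    by (cases "k < length xs") (auto simp: list_perm_def)
qed

lemma list_perm_less:
  "set xs \<subseteq> set ys \<Longrightarrow> length xs = length ys \<Longrightarrow> k < length xs \<Longrightarrow>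
   list_perm xs ys k < length xs"
  by (metis list_perm_def nth_mem pos_in_less subsetD)

lemma list_perm_comp:
  assumes "length xs = length ys" "length ys = length zs" "set xs \<subseteq> set ys"
  shows "list_perm ys zs \<circ> list_perm xs ys = list_perm xs zs"
proof
  fix k show "(list_perm ys zs \<circ> list_perm xs ys) k = list_perm xs zs k"
  proof (cases "k < length xs")
    case True
    then have m: "xs ! k \<in> set ys"
      using assms(3) by auto
    then show ?thesis
      using True pos_in_less[OF m] nth_pos_in[OF m] assms by (simp add: list_perm_def)
  qed (use assms in \<open>simp add: list_perm_def\<close>)
qed

lemma list_perm_self: "distinct xs \<Longrightarrow> list_perm xs xs = id"
  by (rule list_perm_eqI) auto

lemma permutation_list_perm:
  assumes "distinct xs" "distinct ys" "set xs = set ys"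
  shows "permutation (list_perm xs ys)"
proof -
  have len: "length xs = length ys"
    using assms distinct_card by metis
  have inv: "list_perm ys xs (list_perm xs ys k) = k" "list_perm xs ys (list_perm ys xs k) = k" for k
    using list_perm_comp[OF len len[symmetric]] list_perm_comp[OF len[symmetric] len] assms
    by (simp_all add: list_perm_self fun_eq_iff)
  have "bij_betw (list_perm xs ys) {..<length xs} {..<length xs}"
    by (rule bij_betw_byWitness[where f' = "list_perm ys xs"])
      (use inv list_perm_less[of xs ys] list_perm_less[of ys xs] assms len in auto)
  then have "list_perm xs ys permutes {..<length xs}"
    by (rule bij_imp_permutes) (simp add: list_perm_def)
  then show ?thesis
    by (meson finite_lessThan permutes_imp_permutation)
qed

lemma rel_sign_mult:
  assumes "distinct xs" "distinct ys" "distinct zs" "set xs = set ys" "set ys = set zs"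
  shows "rel_sign xs zs = rel_sign xs ys * rel_sign ys zs"
proof -
  have "length xs = length ys" "length ys = length zs"
    using assms distinct_card by metis+
  then have "list_perm xs zs = list_perm ys zs \<circ> list_perm xs ys"
    using list_perm_comp assms(4) by (metis equalityD1)
  then show ?thesis
    using sign_compose[OF permutation_list_perm[of ys zs] permutation_list_perm[of xs ys]] assms
    by (simp add: rel_sign_def mult.commute)
qed

lemma rel_sign_self: "distinct xs \<Longrightarrow> rel_sign xs xs = 1"
  by (simp add: rel_sign_def list_perm_self)

lemma rel_sign_square [simp]: "rel_sign xs ys * rel_sign xs ys = 1"
  by (simp add: rel_sign_def)

lemma rel_sign_commute:
  assumes "distinct xs" "distinct ys" "set xs = set ys"
  shows "rel_sign ys xs = rel_sign xs ys"
proof -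
  have "rel_sign xs xs = rel_sign xs ys * rel_sign ys xs"
    by (rule rel_sign_mult[OF assms(1,2,1) assms(3) assms(3)[symmetric]])
  then have "rel_sign xs ys * rel_sign ys xs = 1"
    using rel_sign_self[OF assms(1)] by simp
  then have "rel_sign xs ys * (rel_sign xs ys * rel_sign ys xs) = rel_sign xs ys"
    by simp
  then show ?thesis
    by (simp flip: mult.assoc)
qed

lemma rel_sign_swap_adjacent:
  assumes "distinct (as @ u # w # bs)"
  shows "rel_sign (as @ u # w # bs) (as @ w # u # bs) = -1"
proof -
  let ?k = "length as"
  have "list_perm (as @ u # w # bs) (as @ w # u # bs) = Transposition.transpose ?k (Suc ?k)"
  proof (rule list_perm_eqI)
    fix k assume k: "k < length (as @ u # w # bs)"
    show "Transposition.transpose ?k (Suc ?k) k < length (as @ u # w # bs) \<and>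
      (as @ u # w # bs) ! k = (as @ w # u # bs) ! Transposition.transpose ?k (Suc ?k) k"
    proof (cases "k < ?k")
      case False
      then obtain j where j: "k = ?k + j"
        using le_Suc_ex not_less by blast
      show ?thesis using k
        by (cases j; cases "j - 1") (auto simp: j Transposition.transpose_def nth_append)
    qed (auto simp: Transposition.transpose_def nth_append)
  qed (use assms in \<open>auto simp: Transposition.transpose_def\<close>)
  then show ?thesis
    by (simp add: rel_sign_def sign_swap_id)
qed

lemma rel_sign_move_to_end:
  "distinct (as @ v # bs) \<Longrightarrow> rel_sign (as @ v # bs) (as @ bs @ [v]) = (-1) ^ length bs"
proof (induction bs arbitrary: as)
  case (Cons b bs)
  have "distinct ((as @ [b]) @ v # bs)"
    using Cons.prems by auto
  then have "rel_sign ((as @ [b]) @ v # bs) ((as @ [b]) @ bs @ [v]) = (-1) ^ length bs"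
    by (rule Cons.IH)
  moreover have "rel_sign (as @ v # b # bs) ((as @ [b]) @ bs @ [v]) =
      rel_sign (as @ v # b # bs) (as @ b # v # bs) *
      rel_sign ((as @ [b]) @ v # bs) ((as @ [b]) @ bs @ [v])"
    using rel_sign_mult[of "as @ v # b # bs" "as @ b # v # bs" "(as @ [b]) @ bs @ [v]"] Cons.prems
    by auto
  ultimately show ?case
    using rel_sign_swap_adjacent[OF Cons.prems] by simp
qed (simp add: rel_sign_self)

lemma rel_sign_snoc:
  assumes "v \<notin> set xs" "v \<notin> set ys" "set xs = set ys" "length xs = length ys"
  shows "rel_sign (xs @ [v]) (ys @ [v]) = rel_sign xs ys"
proof -
  have "list_perm (xs @ [v]) (ys @ [v]) = list_perm xs ys"
  proof
    fix k show "list_perm (xs @ [v]) (ys @ [v]) k = list_perm xs ys k"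
      using assms nth_mem[of k xs]
      by (cases "k < length xs")
        (auto simp: list_perm_def nth_append pos_in_append_in pos_in_append_notin)
  qed
  then show ?thesis
    by (simp add: rel_sign_def)
qed

lemma rel_sign_remove1:
  assumes dL: "distinct L" and dM: "distinct M" and s: "set L = set M" and v: "v \<in> set L"
  shows "rel_sign L M = (-1) ^ (pos_in v L + pos_in v M) * rel_sign (remove1 v L) (remove1 v M)"
proof -
  obtain as bs where L: "L = as @ v # bs" using v split_list by metis
  obtain cs ds where M: "M = cs @ v # ds" using v s split_list by metis
  have len: "length as + length bs = length cs + length ds"
    using dL dM s distinct_card L M by (metis length_append length_Cons add_Suc_right nat.inject)
  have notin: "v \<notin> set as" "v \<notin> set bs" "v \<notin> set cs" "v \<notin> set ds"
    using dL dM L M by auto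
  have sets: "set (as @ bs) = set (cs @ ds)"
    using s dL dM L M by auto
  have "rel_sign L M = rel_sign L (as @ bs @ [v]) * rel_sign (as @ bs @ [v]) (cs @ ds @ [v])
      * rel_sign (cs @ ds @ [v]) M"
    using rel_sign_mult[of L "as @ bs @ [v]" M] rel_sign_mult[of "as @ bs @ [v]" "cs @ ds @ [v]" M]
      dL dM L M s by auto
  also have "\<dots> = (-1) ^ (length bs + length ds) * rel_sign (as @ bs) (cs @ ds)"
  proof -
    have "rel_sign L (as @ bs @ [v]) = (-1) ^ length bs"
      using rel_sign_move_to_end dL L by simp
    moreover have "rel_sign (cs @ ds @ [v]) M = (-1) ^ length ds"
      using rel_sign_move_to_end[of cs v ds] rel_sign_commute[of M "cs @ ds @ [v]"] dM M by auto
    moreover have "rel_sign (as @ bs @ [v]) (cs @ ds @ [v]) = rel_sign (as @ bs) (cs @ ds)"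
      using rel_sign_snoc[of v "as @ bs" "cs @ ds"] notin sets len by simp
    ultimately show ?thesis
      by (simp add: power_add mult_ac)
  qed
  also have "(-1::int) ^ (length bs + length ds) = (-1) ^ (length as + length cs)"
    using len by (simp add: minus_one_power_iff) presburger
  finally show ?thesis
    using notin L M by (simp add: pos_in_append_notin remove1_append)
qed

subsection \<open>Incidence signs\<close>

lemma inc_sign_square [simp]: "inc_sign ord G H * inc_sign ord G H = 1"
proof -
  have "((-1::int) ^ n) * (-1) ^ n = 1" for n
    by (simp flip: power_add)
  then show ?thesis
    by (simp add: inc_sign_def Let_def mult_ac)
qed

lemma inc_sign_wrt_ordering:
  assumes oH: "distinct (ord H)" "set (ord H) = H"
    and oG: "distinct (ord (H - {b}))" "set (ord (H - {b})) = H - {b}"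
    and M: "distinct M" "set M = H" and b: "b \<in> H"
  shows "inc_sign ord (H - {b}) H =
    rel_sign (ord H) M * (-1) ^ pos_in b M * rel_sign (remove1 b M) (ord (H - {b}))"
proof -
  let ?L = "ord H" and ?G = "ord (H - {b})"
  define s t where "s = (-1::int) ^ pos_in b ?L" and "t = (-1::int) ^ pos_in b M"
  have ss: "s * s = 1" and tt: "t * t = 1"
    by (simp_all add: s_def t_def flip: power_add)
  have "rel_sign ?L M = s * t * rel_sign (remove1 b ?L) (remove1 b M)"
    using rel_sign_remove1[of ?L M b] oH M b by (simp add: s_def t_def power_add)
  then have "s * t * rel_sign ?L M = (s * s) * (t * t) * rel_sign (remove1 b ?L) (remove1 b M)"
    by (simp add: mult_ac)
  then have R: "rel_sign (remove1 b ?L) (remove1 b M) = s * t * rel_sign ?L M"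
    by (simp add: ss tt)
  have "the_elem (H - (H - {b})) = b"
    using b by (simp add: Diff_Diff_Int)
  then have "inc_sign ord (H - {b}) H = s * rel_sign (remove1 b ?L) ?G"
    by (simp add: inc_sign_def Let_def s_def)
  also have "\<dots> = s * (rel_sign (remove1 b ?L) (remove1 b M) * rel_sign (remove1 b M) ?G)"
    using rel_sign_mult[of "remove1 b ?L" "remove1 b M" ?G] oH oG M by auto
  also have "\<dots> = (s * s) * t * rel_sign ?L M * rel_sign (remove1 b M) ?G"
    by (simp add: R mult_ac)
  finally show ?thesis
    by (simp add: ss t_def mult_ac)
qed

text \<open>The relation \<partial>\<partial>[V] = 0 at the coefficient of [V - {a,b}].\<close>
lemma inc_sign_boundary_square:
  assumes ord: "\<And>H. H \<subseteq> V \<Longrightarrow> distinct (ord H) \<and> set (ord H) = H"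
    and ab: "a \<in> V" "b \<in> V" "a \<noteq> b"
  shows "inc_sign ord (V - {a, b}) (V - {a}) * inc_sign ord (V - {a, b}) (V - {b}) =
    - (inc_sign ord (V - {a}) V * inc_sign ord (V - {b}) V)"
proof -
  define W where "W = ord V"
  have W: "distinct W" "set W = V"
    using ord[of V] by (simp_all add: W_def)
  define A where "A c = rel_sign (remove1 c W) (ord (V - {c}))" for c
  define C where "C = rel_sign (remove1 b (remove1 a W)) (ord (V - {a, b}))"
  have facet: "inc_sign ord (V - {c}) V = (-1) ^ pos_in c W * A c" if "c \<in> V" for c
    using inc_sign_wrt_ordering[of ord V c W] ord[of V] ord[of "V - {c}"] W that
    by (simp add: A_def W_def rel_sign_self)
  have ridge: "inc_sign ord (V - {c, d}) (V - {c}) =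
      A c * (-1) ^ pos_in d (remove1 c W) * rel_sign (remove1 d (remove1 c W)) (ord (V - {c, d}))"
    if "c \<in> V" "d \<in> V" "c \<noteq> d" for c d
  proof -
    have "V - {c} - {d} = V - {c, d}"
      by blast
    moreover have "rel_sign (ord (V - {c})) (remove1 c W) = A c"
      using rel_sign_commute[of "remove1 c W" "ord (V - {c})"] ord[of "V - {c}"] W
      by (simp add: A_def)
    ultimately show ?thesis
      using inc_sign_wrt_ordering[of ord "V - {c}" d "remove1 c W"]
        ord[of "V - {c}"] ord[of "V - {c, d}"] W that
      by auto
  qed
  have C_swap: "rel_sign (remove1 a (remove1 b W)) (ord (V - {b, a})) = C"
    by (simp add: C_def remove1_commute insert_commute)
  have "pos_in b (remove1 a W) + pos_in a (remove1 b W) + 1 = pos_in a W + pos_in b W"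
    using pos_in_remove1_sum[of W a b] W ab by simp
  then have parity: "(-1::int) ^ (pos_in a W + pos_in b W) =
      - ((-1) ^ (pos_in b (remove1 a W) + pos_in a (remove1 b W)))"
    by (metis power_Suc mult_minus1 Suc_eq_plus1)
  have "inc_sign ord (V - {a, b}) (V - {a}) * inc_sign ord (V - {a, b}) (V - {b}) =
      (-1) ^ (pos_in b (remove1 a W) + pos_in a (remove1 b W)) * A a * A b * (C * C)"
    using ridge[of a b] ridge[of b a] ab C_swap
    by (simp add: insert_commute C_def power_add mult_ac)
  also have "\<dots> = - (inc_sign ord (V - {a}) V * inc_sign ord (V - {b}) V)"
    using facet ab parity by (simp add: C_def power_add mult_ac)
  finally show ?thesis .
qed

lemma B_sign_psubset:
  assumes "finite H" "G \<subset> H"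
  shows "B_sign ord G H = inc_sign ord G H" "B_sign ord H G = inc_sign ord G H"
  using psubset_card_mono[OF assms] by (simp_all add: B_sign_def)

lemma cycle_sign_hexagon:
  "cycle_sign ord [a0, a1, a2, a3, a4, a5] =
    B_sign ord a0 a1 * B_sign ord a1 a2 * B_sign ord a2 a3 *
    B_sign ord a3 a4 * B_sign ord a4 a5 * B_sign ord a5 a0"
proof -
  have "(\<Prod>j<(6::nat). g j) = g 0 * g 1 * g 2 * g 3 * g 4 * g 5" for g :: "nat \<Rightarrow> int"
    by (simp add: numeral_eq_Suc mult.assoc)
  then show ?thesis
    unfolding cycle_sign_def by simp
qed

lemma cycle_sign_hexagon_boundary:
  assumes ord: "\<And>H. H \<subseteq> V \<Longrightarrow> distinct (ord H) \<and> set (ord H) = H"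
    and xyz: "x \<in> V" "y \<in> V" "z \<in> V" "x \<noteq> y" "y \<noteq> z" "z \<noteq> x"
  shows "cycle_sign ord [V - {x}, V - {x, y}, V - {y}, V - {y, z}, V - {z}, V - {z, x}] = -1"
proof -
  have "finite V"
    using ord[of V] by (metis finite_set order_refl)
  then have B: "B_sign ord (V - {a}) (V - {a, b}) = inc_sign ord (V - {a, b}) (V - {a})"
      "B_sign ord (V - {a, b}) (V - {b}) = inc_sign ord (V - {a, b}) (V - {b})"
    if "a \<in> V" "b \<in> V" "a \<noteq> b" for a b
    using B_sign_psubset[of "V - {a}" "V - {a, b}"] B_sign_psubset[of "V - {b}" "V - {a, b}"] that
    by blast+
  let ?s = "\<lambda>a b. inc_sign ord (V - {a, b}) (V - {a}) * inc_sign ord (V - {a, b}) (V - {b})"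
    and ?t = "\<lambda>a. inc_sign ord (V - {a}) V"
  have "cycle_sign ord [V - {x}, V - {x, y}, V - {y}, V - {y, z}, V - {z}, V - {z, x}] =
      ?s x y * ?s y z * ?s z x"
    unfolding cycle_sign_hexagon B[OF xyz(1,2,4)] B[OF xyz(2,3,5)] B[OF xyz(3,1,6)]
    by (simp only: mult.assoc)
  also have "\<dots> = (- (?t x * ?t y)) * (- (?t y * ?t z)) * (- (?t z * ?t x))"
    using inc_sign_boundary_square[OF ord] xyz by presburger
  also have "\<dots> = - ((?t x * ?t x) * (?t y * ?t y) * (?t z * ?t z))"
    by algebra
  finally show ?thesis
    by simp
qed

lemma B_cycle_hexagon:
  assumes K: "Pow V \<subseteq> K" and card: "card V = i + 3"
    and xyz: "x \<in> V" "y \<in> V" "z \<in> V" "x \<noteq> y" "y \<noteq> z" "z \<noteq> x"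
  shows "B_cycle i K [V - {x}, V - {x, y}, V - {y}, V - {y, z}, V - {z}, V - {z, x}]"
proof -
  have fin: "finite V"
    using card by (simp add: card_ge_0_finite)
  have facet: "V - {a} \<in> faces_of (i + 1) K" if "a \<in> V" for a
    using K card that fin by (auto simp: faces_of_def)
  have ridge: "V - {a, b} \<in> faces_of i K" if "a \<in> V" "b \<in> V" "a \<noteq> b" for a b
    using K card that fin by (auto simp: faces_of_def card_Diff_subset)
  have adj: "B_adj i K (V - {a}) (V - {a, b})" "B_adj i K (V - {a, b}) (V - {b})"
    if "a \<in> V" "b \<in> V" "a \<noteq> b" for a b
    using facet ridge that unfolding B_adj_def by blast+
  let ?c = "[V - {x}, V - {x, y}, V - {y}, V - {y, z}, V - {z}, V - {z, x}]"
  have "B_adj i K (?c ! j) (?c ! ((j + 1) mod 6))" if "j < 6" for j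
  proof -
    have "j = 0 \<or> j = 1 \<or> j = 2 \<or> j = 3 \<or> j = 4 \<or> j = 5"
      using that by linarith
    then show ?thesis
      using adj[OF xyz(1,2,4)] adj[OF xyz(2,3,5)] adj[OF xyz(3,1,6)] by (elim disjE) simp_all
  qed
  moreover have "distinct ?c"
    using xyz by auto
  moreover have "set ?c \<subseteq> B_vertices i K"
    using facet ridge xyz by (simp add: B_vertices_def)
  ultimately show ?thesis
    by (simp add: B_cycle_def)
qed

lemma not_B_balanced_if_simplex:
  assumes "orientation K ord" "Pow V \<subseteq> K" "card V = i + 3"
  shows "\<not> B_balanced i K ord"
proof
  assume balanced: "B_balanced i K ord"
  obtain S where S: "S \<subseteq> V" "card S = 3"
    using obtain_subset_with_card_n[of 3 V] assms(3) by auto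
  then obtain x y z where "S = {x, y, z}" "x \<noteq> y" "y \<noteq> z" "x \<noteq> z"
    by (metis card_3_iff)
  then have xyz: "x \<in> V" "y \<in> V" "z \<in> V" "x \<noteq> y" "y \<noteq> z" "z \<noteq> x"
    using S(1) by auto
  have ord: "distinct (ord H) \<and> set (ord H) = H" if "H \<subseteq> V" for H
    using assms(1,2) that by (auto simp: orientation_def)
  have "cycle_sign ord [V - {x}, V - {x, y}, V - {y}, V - {y, z}, V - {z}, V - {z, x}] > 0"
    using balanced B_cycle_hexagon[OF assms(2,3) xyz] by (simp add: B_balanced_def)
  then show False
    using cycle_sign_hexagon_boundary[OF ord xyz] by simp
qed

lemma simplicial_complex_join:
  assumes "simplicial_complex K1" "simplicial_complex K2"
  shows "simplicial_complex (join K1 K2)"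
proof -
  have "join K1 K2 = (\<lambda>(F1, F2). F1 \<union> F2) ` (K1 \<times> K2)"
    by (auto simp: join_def)
  then have "finite (join K1 K2)"
    using assms by (simp add: simplicial_complex_def)
  moreover have "G \<in> join K1 K2" if "F1 \<in> K1" "F2 \<in> K2" "G \<subseteq> F1 \<union> F2" for F1 F2 G
  proof -
    have "G \<inter> F1 \<in> K1" "G \<inter> F2 \<in> K2"
      using assms that by (auto simp: simplicial_complex_def)
    moreover have "G = (G \<inter> F1) \<union> (G \<inter> F2)"
      using that by blast
    ultimately show ?thesis
      unfolding join_def by blast
  qed
  ultimately show ?thesis
    using assms by (auto simp: simplicial_complex_def join_def)
qed

lemma cdim_attained:
  assumes "simplicial_complex K" "K \<noteq> {}"
  obtains F where "F \<in> K" "int (card F) = cdim K + 1"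
proof -
  have "cdim K \<in> (\<lambda>F. int (card F) - 1) ` K"
    using assms unfolding cdim_def simplicial_complex_def by (intro Max_in) auto
  then show ?thesis
    using that by force
qed

theorem mainTheorem9:
  fixes K1 K2 :: "'a set set" and i :: nat and ord :: "'a set \<Rightarrow> 'a list"
  assumes "simplicial_complex K1" and "simplicial_complex K2"
    and "vertices K1 \<noteq> {}" and "vertices K2 \<noteq> {}"
    and "vertices K1 \<inter> vertices K2 = {}"
    and "cdim K1 + cdim K2 \<ge> int i + 1"
    and "orientation (join K1 K2) ord"
  shows "\<not> B_balanced i (join K1 K2) ord"
proof -
  obtain F1 F2 where F1: "F1 \<in> K1" "int (card F1) = cdim K1 + 1"
    and F2: "F2 \<in> K2" "int (card F2) = cdim K2 + 1"
    using cdim_attained assms(1-4) unfolding vertices_def by (metis Union_empty)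
  have "finite F1" "finite F2" "F1 \<inter> F2 = {}"
    using assms(1,2,5) F1 F2 by (auto simp: simplicial_complex_def vertices_def)
  then have "i + 3 \<le> card (F1 \<union> F2)"
    using F1(2) F2(2) assms(6) card_Un_disjoint by fastforce
  then obtain V where V: "V \<subseteq> F1 \<union> F2" "card V = i + 3"
    by (rule obtain_subset_with_card_n)
  have "F1 \<union> F2 \<in> join K1 K2"
    using F1 F2 by (auto simp: join_def)
  then have "Pow V \<subseteq> join K1 K2"
    using simplicial_complex_join[OF assms(1,2)] V(1) by (auto simp: simplicial_complex_def)
  then show ?thesis
    using not_B_balanced_if_simplex[OF assms(7)] V(2) by blast
qed

end
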